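(* Let $c>1$ and $\alpha>0$ be fixed. Then, as $N\to\infty$, $$\sum_{\substack{N<mp^a\le cN\\ p^a>N/\log^\alpha N}}\frac1{mp^a}=\frac{\alpha(\log c)(\log\log N)}{\log N}+O\!\left(\frac1{\log N}\right),$$ where the sum is over pairs $(m,p^a)$ with $m$ a positive integer, $p$ prime and $a\ge1$. Also, $$\sum_{\substack{N<mp\le cN\\ p>N/\log^\alpha N}}\frac1{mp}=\frac{\alpha(\log c)(\log\log N)}{\log N}+O\!\left(\frac1{\log N}\right),$$ the sum being over pairs $(m,p)$ with $m$ a positive integer and $p$ prime. *)

theory Defs
  imports "HOL-Analysis.Analysis" "HOL-Library.Landau_Symbols"
begin

text \<open>Sum over triples (m,p,a), m \<ge> 1, p prime, a \<ge> 1 (each prime power p^a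
  corresponds to a unique pair (p,a)), with N < m p^a \<le> cN and p^a > N / (log N)^alpha.\<close>
definition prime_power_sum :: "real \<Rightarrow> real \<Rightarrow> nat \<Rightarrow> real" where
  "prime_power_sum c \<alpha> N =
     (\<Sum>(m, p, a) \<in> {(m, p, a). m \<ge> 1 \<and> prime p \<and> a \<ge> 1 \<and>
          real N < real (m * p ^ a) \<and> real (m * p ^ a) \<le> c * real N \<and>
          real (p ^ a) > real N / (ln (real N)) powr \<alpha>}.
        1 / real (m * p ^ a))"

definition prime_sum :: "real \<Rightarrow> real \<Rightarrow> nat \<Rightarrow> real" where
  "prime_sum c \<alpha> N =
     (\<Sum>(m, p) \<in> {(m, p). m \<ge> 1 \<and> prime p \<and>
          real N < real (m * p) \<and> real (m * p) \<le> c * real N \<and>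
          real p > real N / (ln (real N)) powr \<alpha>}.
        1 / real (m * p))"

end

(*
  Grouping the pairs (m, p) by p, the sum over m is a harmonic sum over (N/p, cN/p], which is
  log c + O(p/N) for p <= N and at most c for p > N. With y = N / log^alpha N, the primes in
  (y, N] thus contribute log c times the sum of 1/p over them, up to an error O(pi(N)/N), and
  the primes in (N, cN] contribute O(1/log N) because 1/p <= log p / (p log N).
  By Mertens' estimate the sum of log p / p over (y, N] is log N - log y + O(1), that is
  alpha log log N + O(1). Since log y < log p <= log N there and log y = log N - alpha log log N,
  comparing 1/p with log p / (p log N) and log p / (p log y) gives the sum of 1/p over (y, N]
  without partial summation.
  The pairs (m, p^a) with a >= 2 number O(log^alpha N sqrt N log N), each term being < 1/N.
  Chebyshev's bound psi(n) = O(n) and Mertens' estimate follow from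
  log n! = sum of Lambda(d) floor(n/d), from n log n - n <= log n! <= n log n and from
  binomial(2k, k) <= 4^k.
*)

theory Submission
  imports Defs "HOL-Number_Theory.Prime_Powers" "HOL-Real_Asymp.Real_Asymp"
begin

section \<open>Chebyshev's bound and Mertens' estimate\<close>

definition chebyshev_psi :: "nat \<Rightarrow> real" where
  "chebyshev_psi n = (\<Sum>d\<in>{1..n}. mangoldt d)"

lemma sum_atLeastAtMost_split:
  fixes f :: "nat \<Rightarrow> 'a::comm_monoid_add"
  assumes "a \<le> b"
  shows "(\<Sum>d\<in>{1..b}. f d) = (\<Sum>d\<in>{1..a}. f d) + (\<Sum>d\<in>{a<..b}. f d)"
proof -
  have "{1..b} = {1..a} \<union> {a<..b}" using assms by auto
  then show ?thesis by (simp add: sum.union_disjoint ivl_disj_int)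
qed

lemma ln_fact_conv_sum_mangoldt:
  assumes "n \<le> M"
  shows "ln (fact n :: real) = (\<Sum>d\<in>{1..M}. mangoldt d * real (n div d))"
  using assms
proof (induction n)
  case 0
  then show ?case by simp
next
  case (Suc n)
  have divisors: "{d. d dvd Suc n} = {d\<in>{1..M}. d dvd Suc n}"
    using Suc.prems by (auto dest: dvd_imp_le intro: Suc_leI dvd_pos_nat)
  have "ln (fact (Suc n) :: real) = ln (real (Suc n)) + ln (fact n)"
    by (simp add: ln_mult del: of_nat_Suc)
  also have "ln (real (Suc n)) = (\<Sum>d\<in>{d\<in>{1..M}. d dvd Suc n}. mangoldt d)"
    using mangoldt_sum[of "Suc n", where 'a=real] by (simp add: divisors)
  also have "\<dots> = (\<Sum>d\<in>{1..M}. mangoldt d * (if d dvd Suc n then 1 else 0))"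
    by (subst sum.inter_filter) (auto intro!: sum.cong)
  also have "ln (fact n :: real) = (\<Sum>d\<in>{1..M}. mangoldt d * real (n div d))"
    using Suc by simp
  also have "(\<Sum>d\<in>{1..M}. mangoldt d * (if d dvd Suc n then 1 else 0)) + \<dots>
      = (\<Sum>d\<in>{1..M}. mangoldt d * real (Suc n div d))"
    by (subst sum.distrib[symmetric], intro sum.cong refl)
      (auto simp: div_Suc dvd_eq_mod_eq_0 algebra_simps)
  finally show ?case .
qed

lemma chebyshev_psi_mono: "m \<le> n \<Longrightarrow> chebyshev_psi m \<le> chebyshev_psi n"
  unfolding chebyshev_psi_def by (intro sum_mono2) (auto simp: mangoldt_nonneg)

lemma chebyshev_psi_double_diff_le: "chebyshev_psi (2 * k) - chebyshev_psi k \<le> 2 * real k * ln 2"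
proof -
  define w where "w d = real ((2 * k) div d) - 2 * real (k div d)" for d
  have w_nonneg: "w d \<ge> 0" if "d > 0" for d
  proof -
    have "2 * (k div d) * d \<le> 2 * k" using div_times_less_eq_dividend[of k d] by simp
    then have "2 * (k div d) \<le> (2 * k) div d" using that by (simp add: less_eq_div_iff_mult_less_eq)
    then show ?thesis unfolding w_def by linarith
  qed
  have w_top: "w d = 1" if "d \<in> {k<..2 * k}" for d
  proof -
    have "(2 * k) div d = 1" using that by (intro div_nat_eqI) auto
    then show ?thesis using that unfolding w_def by simp
  qed
  have "chebyshev_psi (2 * k) - chebyshev_psi k = (\<Sum>d\<in>{k<..2 * k}. mangoldt d * w d)"
    unfolding chebyshev_psi_def using sum_atLeastAtMost_split[of k "2 * k" "mangoldt :: nat \<Rightarrow> real"]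
    by (simp add: w_top)
  also have "\<dots> \<le> (\<Sum>d\<in>{1..2 * k}. mangoldt d * w d)"
    by (intro sum_mono2) (auto intro!: mult_nonneg_nonneg mangoldt_nonneg w_nonneg)
  also have "\<dots> = ln (fact (2 * k)) - 2 * ln (fact k)"
    using ln_fact_conv_sum_mangoldt[of "2 * k" "2 * k"] ln_fact_conv_sum_mangoldt[of k "2 * k"]
    by (simp add: w_def sum_subtractf sum_distrib_left algebra_simps)
  also have "\<dots> = ln (real ((2 * k) choose k))"
  proof -
    have "fact (2 * k) = (fact k * fact k * ((2 * k) choose k) :: real)"
      using binomial_fact_lemma[of k "2 * k"] by (simp flip: of_nat_mult)
    then show ?thesis by (simp add: ln_mult)
  qed
  also have "\<dots> \<le> ln (2 ^ (2 * k))"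
    using binomial_le_pow2[of "2 * k" k] by (subst ln_le_cancel_iff) (auto simp flip: of_nat_le_iff)
  also have "\<dots> = 2 * real k * ln 2" by (simp add: ln_realpow)
  finally show ?thesis .
qed

lemma chebyshev_psi_le: "chebyshev_psi n \<le> 4 * ln 2 * real n"
proof (induction n rule: less_induct)
  case (less n)
  show ?case
  proof (cases "n \<le> 1")
    case True
    then show ?thesis by (auto simp: chebyshev_psi_def le_Suc_eq)
  next
    case False
    define k where "k = (n + 1) div 2"
    have k: "k < n" "n \<le> 2 * k" "2 * k \<le> n + 1" using False unfolding k_def by auto
    have "chebyshev_psi n \<le> chebyshev_psi (2 * k)" using k by (intro chebyshev_psi_mono)
    also have "\<dots> \<le> chebyshev_psi k + 2 * real k * ln 2"
      using chebyshev_psi_double_diff_le[of k] by simp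
    also have "\<dots> \<le> 6 * ln 2 * real k" using less.IH[OF k(1)] by (simp add: algebra_simps)
    also have "\<dots> \<le> 4 * ln 2 * real n"
    proof -
      have "6 * real k \<le> 4 * real n" using k False by linarith
      then show ?thesis by simp
    qed
    finally show ?thesis .
  qed
qed

lemma ln_fact_le: "ln (fact n :: real) \<le> real n * ln (real n)"
proof (cases "n = 0")
  case False
  have "ln (fact n :: real) \<le> ln (real n ^ n)"
    using fact_le_power[of n, where 'a=real] by (subst ln_le_cancel_iff) auto
  then show ?thesis using False by (simp add: ln_realpow)
qed simp

lemma ln_fact_ge: "real n * ln (real n) - real n \<le> ln (fact n :: real)"
proof (induction n)
  case 0
  then show ?case by simp
next
  case (Suc n)
  have step: "real (Suc n) * ln (real (Suc n)) - real n * ln (real n) \<le> ln (real (Suc n)) + 1"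
  proof (cases "n = 0")
    case False
    have "real n * (ln (real (Suc n)) - ln (real n)) \<le> real n * (1 / real n)"
      using ln_diff_le_inverse[of "real n"] False by (intro mult_left_mono) (auto simp: add.commute)
    then show ?thesis using False by (simp add: algebra_simps)
  qed simp
  have "ln (fact (Suc n) :: real) = ln (real (Suc n)) + ln (fact n)"
    by (simp add: ln_mult del: of_nat_Suc)
  then show ?case using Suc step by simp
qed

definition mertens_sum :: "nat \<Rightarrow> real" where
  "mertens_sum n = (\<Sum>d\<in>{1..n}. mangoldt d / real d)"

lemma of_nat_div_gt_diff_one: "real n / real d - 1 < real (n div d)"
  using real_of_int_floor_gt_diff_one[of "real n / real d"] by (simp add: floor_divide_of_nat_eq)

lemma mertens_sum_bounds:
  assumes "n \<ge> 1"
  shows "ln (real n) - 1 \<le> mertens_sum n" "mertens_sum n \<le> ln (real n) + 4 * ln 2"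
proof -
  have n_mertens: "real n * mertens_sum n = (\<Sum>d\<in>{1..n}. mangoldt d * (real n / real d))"
    unfolding mertens_sum_def sum_distrib_left by (intro sum.cong) auto
  note ln_fact = ln_fact_conv_sum_mangoldt[OF order_refl]
  have "ln (fact n :: real) \<le> real n * mertens_sum n"
    unfolding ln_fact n_mertens by (intro sum_mono mult_left_mono of_nat_div_le_of_nat mangoldt_nonneg)
  then have "real n * (ln (real n) - 1) \<le> real n * mertens_sum n"
    using ln_fact_ge[of n] by (simp add: algebra_simps)
  then show "ln (real n) - 1 \<le> mertens_sum n" using assms by simp
  have "real n * mertens_sum n - chebyshev_psi n = (\<Sum>d\<in>{1..n}. mangoldt d * (real n / real d - 1))"
    unfolding n_mertens chebyshev_psi_def by (simp add: sum_subtractf algebra_simps)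
  also have "\<dots> \<le> ln (fact n)"
    unfolding ln_fact using of_nat_div_gt_diff_one
    by (intro sum_mono mult_left_mono less_imp_le mangoldt_nonneg) auto
  finally have "real n * mertens_sum n \<le> real n * (ln (real n) + 4 * ln 2)"
    using ln_fact_le[of n] chebyshev_psi_le[of n] by (simp add: algebra_simps)
  then show "mertens_sum n \<le> ln (real n) + 4 * ln 2" using assms by simp
qed

section \<open>Harmonic sums over cofactors\<close>

lemma sum_inverse_greaterThanAtMost_bounds:
  assumes "1 \<le> a" "a \<le> b"
  shows "ln (real b + 1) - ln (real a + 1) \<le> (\<Sum>m\<in>{a<..b}. 1 / real m)"
    and "(\<Sum>m\<in>{a<..b}. 1 / real m) \<le> ln (real b) - ln (real a)"
proof -
  have "ln (real b + 1) - ln (real a + 1) \<le> (\<Sum>m\<in>{a<..b}. 1 / real m) \<and>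
        (\<Sum>m\<in>{a<..b}. 1 / real m) \<le> ln (real b) - ln (real a)"
    using assms(2)
  proof (induction b rule: dec_induct)
    case base
    then show ?case by simp
  next
    case (step b)
    have b: "real b \<ge> 1" using step assms by simp
    have sum_Suc: "(\<Sum>m\<in>{a<..Suc b}. 1 / real m) = (\<Sum>m\<in>{a<..b}. 1 / real m) + 1 / (real b + 1)"
    proof -
      have "{a<..Suc b} = insert (Suc b) {a<..b}" using step by auto
      then show ?thesis by simp
    qed
    have "ln (real b + 1 + 1) - ln (real b + 1) < 1 / (real b + 1)"
      using b by (intro ln_diff_le_inverse) simp
    moreover have "ln (real b / (real b + 1)) \<le> real b / (real b + 1) - 1"
      using b by (intro ln_le_minus_one) simp
    then have "1 / (real b + 1) \<le> ln (real b + 1) - ln (real b)"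
      using b by (simp add: ln_div field_simps)
    moreover have Suc_b: "real (Suc b) = real b + 1" by simp
    ultimately show ?case using step.IH unfolding sum_Suc Suc_b by linarith
  qed
  then show "ln (real b + 1) - ln (real a + 1) \<le> (\<Sum>m\<in>{a<..b}. 1 / real m)"
    and "(\<Sum>m\<in>{a<..b}. 1 / real m) \<le> ln (real b) - ln (real a)" by auto
qed

definition cofactors :: "real \<Rightarrow> nat \<Rightarrow> nat \<Rightarrow> nat set" where
  "cofactors c N p = {m. real N < real (m * p) \<and> real (m * p) \<le> c * real N}"

definition cofactor_sum :: "real \<Rightarrow> nat \<Rightarrow> nat \<Rightarrow> real" where
  "cofactor_sum c N p = (\<Sum>m\<in>cofactors c N p. 1 / real m)"

lemma cofactors_eq:
  assumes "p > 0" "c \<ge> 0"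
  shows "cofactors c N p = {N div p<..nat \<lfloor>c * real N / real p\<rfloor>}"
proof -
  have "real (m * p) \<le> c * real N \<longleftrightarrow> m \<le> nat \<lfloor>c * real N / real p\<rfloor>" for m
  proof
    assume "real (m * p) \<le> c * real N"
    then show "m \<le> nat \<lfloor>c * real N / real p\<rfloor>"
      using assms by (intro le_nat_floor) (simp add: field_simps)
  next
    assume "m \<le> nat \<lfloor>c * real N / real p\<rfloor>"
    then have "real m \<le> real (nat \<lfloor>c * real N / real p\<rfloor>)" by simp
    also have "\<dots> \<le> c * real N / real p" using assms by (intro of_nat_floor) simp
    finally have "real m \<le> c * real N / real p" .
    then show "real (m * p) \<le> c * real N" using assms by (simp add: field_simps)
  qed
  moreover have "real N < real (m * p) \<longleftrightarrow> N div p < m" for m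
    using assms by (simp only: of_nat_less_iff div_less_iff_less_mult)
  ultimately show ?thesis unfolding cofactors_def by auto
qed

lemma finite_cofactors: "p > 0 \<Longrightarrow> c \<ge> 0 \<Longrightarrow> finite (cofactors c N p)"
  by (simp add: cofactors_eq)

lemma sum_inverse_dilation_approx:
  assumes "1 < c" "1 \<le> x"
  shows "\<bar>(\<Sum>m\<in>{nat \<lfloor>x\<rfloor><..nat \<lfloor>c * x\<rfloor>}. 1 / real m) - ln c\<bar> \<le> 2 / x"
proof -
  define a where "a = nat \<lfloor>x\<rfloor>"
  define b where "b = nat \<lfloor>c * x\<rfloor>"
  have a: "real a \<le> x" "x \<le> real a + 1" "a \<ge> 1"
    using assms(2) unfolding a_def by (simp_all add: of_nat_nat le_nat_floor)
  have b: "real b \<le> c * x" "c * x < real b + 1"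
    using assms unfolding b_def by (simp_all add: of_nat_nat)
  have "x \<le> c * x" using assms by simp
  then have "a \<le> b" using a unfolding b_def by (intro le_nat_floor) linarith
  note harmonic = sum_inverse_greaterThanAtMost_bounds[OF \<open>a \<ge> 1\<close> \<open>a \<le> b\<close>]
  have ln_cx: "ln (c * x) = ln c + ln x" using assms by (simp add: ln_mult)
  have "ln (real b) \<le> ln (c * x)" using b a \<open>a \<le> b\<close> by simp
  moreover have "ln x - ln (real a) \<le> x / real a - 1"
    using ln_le_minus_one[of "x / real a"] a assms(2) by (simp add: ln_div)
  moreover have "x / real a - 1 \<le> 2 / x"
  proof -
    have "x / real a - 1 = (x - real a) / real a" using a by (simp add: field_simps)
    also have "\<dots> \<le> 1 / real a" using a by (intro divide_right_mono) simp_all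
    also have "\<dots> \<le> 2 / x" using a assms(2) by (simp add: field_simps)
    finally show ?thesis .
  qed
  ultimately have upper: "(\<Sum>m\<in>{a<..b}. 1 / real m) \<le> ln c + 2 / x"
    using harmonic(2) ln_cx by linarith
  have "ln (c * x) \<le> ln (real b + 1)" using b assms by simp
  moreover have "ln (real a + 1) \<le> ln (x + 1)" using a by simp
  moreover have "ln (x + 1) - ln x \<le> 1 / x"
    using ln_diff_le_inverse[of x] assms(2) by simp
  moreover have "1 / x \<le> 2 / x" using assms(2) by (intro divide_right_mono) simp_all
  ultimately have lower: "ln c - 2 / x \<le> (\<Sum>m\<in>{a<..b}. 1 / real m)"
    using harmonic(1) ln_cx by linarith
  show ?thesis using upper lower unfolding a_def b_def by (simp add: abs_le_iff)
qed

lemma cofactor_sum_approx_ln: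
  assumes "c > 1" "1 \<le> p" "p \<le> N"
  shows "\<bar>cofactor_sum c N p - ln c\<bar> \<le> 2 * real p / real N"
proof -
  have "N div p = nat \<lfloor>real N / real p\<rfloor>" by (simp add: floor_divide_of_nat_eq)
  then have "cofactor_sum c N p = (\<Sum>m\<in>{nat \<lfloor>real N / real p\<rfloor><..nat \<lfloor>c * (real N / real p)\<rfloor>}. 1 / real m)"
    unfolding cofactor_sum_def using assms by (simp add: cofactors_eq)
  moreover have "1 \<le> real N / real p" using assms by simp
  ultimately show ?thesis
    using sum_inverse_dilation_approx[OF assms(1), of "real N / real p"] by simp
qed

lemma cofactor_sum_nonneg: "cofactor_sum c N p \<ge> 0"
  unfolding cofactor_sum_def by (intro sum_nonneg) auto

lemma cofactor_sum_le:
  assumes "c > 1" "N < p"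
  shows "cofactor_sum c N p \<le> c"
proof -
  have "cofactors c N p \<subseteq> {1..nat \<lfloor>c\<rfloor>}"
  proof
    fix m assume "m \<in> cofactors c N p"
    then have m: "real N < real m * real p" "real m * real p \<le> c * real N"
      unfolding cofactors_def by auto
    then have "m \<ge> 1" by (cases m) auto
    have "c * real N \<le> c * real p" using assms by simp
    then have "real m * real p \<le> c * real p" using m by linarith
    then have "real m \<le> c" using assms by simp
    then show "m \<in> {1..nat \<lfloor>c\<rfloor>}" using \<open>m \<ge> 1\<close> by (auto intro: le_nat_floor)
  qed
  then have "cofactor_sum c N p \<le> (\<Sum>m\<in>{1..nat \<lfloor>c\<rfloor>}. 1 / real m)"
    unfolding cofactor_sum_def by (intro sum_mono2) auto
  also have "\<dots> \<le> real (card {1..nat \<lfloor>c\<rfloor>}) * 1"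
    by (intro sum_bounded_above) auto
  also have "\<dots> \<le> c" using assms by simp
  finally show ?thesis .
qed

section \<open>Sums over primes in an interval\<close>

definition higher_prime_powers :: "real \<Rightarrow> nat set" where
  "higher_prime_powers X = {d. real d \<le> X \<and> primepow d \<and> \<not> prime d}"

lemma prime_power_base_exponent_bounds:
  assumes "prime p" "k \<ge> 2" "real (p ^ k) \<le> X"
  shows "real p \<le> sqrt X" "real k \<le> log 2 X"
proof -
  have p: "p \<ge> 2" using assms prime_ge_2_nat by blast
  have "real p ^ 2 \<le> real p ^ k" using assms p by (intro power_increasing) auto
  then show "real p \<le> sqrt X" using assms by (intro real_le_rsqrt) simp
  have "(2::real) ^ k \<le> real p ^ k" using p by (intro power_mono) auto
  also have "\<dots> \<le> X" using assms(3) by simp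
  finally show "real k \<le> log 2 X" by (rule le_log_of_power) simp
qed

lemma real_card_atMost_nat_floor: "x \<ge> 0 \<Longrightarrow> real (card {..nat \<lfloor>x\<rfloor>}) \<le> x + 1"
  using of_nat_floor[of x] by simp

lemma card_higher_prime_powers_le:
  assumes "X \<ge> 1"
  shows "real (card (higher_prime_powers X)) \<le> (sqrt X + 1) * (log 2 X + 1)"
proof -
  define B where "B = {..nat \<lfloor>sqrt X\<rfloor>} \<times> {..nat \<lfloor>log 2 X\<rfloor>}"
  have "higher_prime_powers X \<subseteq> (\<lambda>(p, k). p ^ k) ` B"
  proof
    fix d assume "d \<in> higher_prime_powers X"
    then obtain p k where pk: "prime p" "k > 0" "d = p ^ k" "real d \<le> X" "\<not> prime d"
      unfolding higher_prime_powers_def primepow_def by blast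
    then have "k \<ge> 2" by (cases "k = 1") auto
    with pk have "real p \<le> sqrt X" "real k \<le> log 2 X"
      using prime_power_base_exponent_bounds by simp_all
    then have "(p, k) \<in> B" unfolding B_def by (simp add: le_nat_floor)
    then show "d \<in> (\<lambda>(p, k). p ^ k) ` B" unfolding pk(3) by (rule rev_image_eqI) simp
  qed
  then have "card (higher_prime_powers X) \<le> card ((\<lambda>(p, k). p ^ k) ` B)"
    by (intro card_mono) (simp_all add: B_def)
  also have "\<dots> \<le> card B" by (intro card_image_le) (simp add: B_def)
  finally have "real (card (higher_prime_powers X)) \<le> real (card B)" by simp
  also have "\<dots> \<le> (sqrt X + 1) * (log 2 X + 1)"
    unfolding B_def card_cartesian_product of_nat_mult using assms
    by (intro mult_mono real_card_atMost_nat_floor) auto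
  finally show ?thesis .
qed

lemma finite_higher_prime_powers: "finite (higher_prime_powers X)"
  by (rule finite_subset[of _ "{..nat \<lfloor>X\<rfloor>}"]) (auto simp: higher_prime_powers_def le_nat_floor)

definition primes_between :: "real \<Rightarrow> real \<Rightarrow> nat set" where
  "primes_between y x = {p. prime p \<and> y < real p \<and> real p \<le> x}"

lemma finite_primes_between: "finite (primes_between y x)"
  by (rule finite_subset[of _ "{..nat \<lfloor>x\<rfloor>}"]) (auto simp: primes_between_def le_nat_floor)

lemma mertens_sum_diff:
  "u \<le> v \<Longrightarrow> mertens_sum v - mertens_sum u = (\<Sum>d\<in>{u<..v}. mangoldt d / real d)"
  unfolding mertens_sum_def using sum_atLeastAtMost_split[of u v "\<lambda>d. mangoldt d / real d"] by simp

lemma sum_ln_prime_div_le_mertens_sum_diff: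
  assumes "u \<le> v"
  shows "(\<Sum>p\<in>primes_between u v. ln (real p) / real p) \<le> mertens_sum v - mertens_sum u"
proof -
  have "(\<Sum>p\<in>primes_between u v. ln (real p) / real p) = (\<Sum>p\<in>primes_between u v. mangoldt p / real p)"
    by (intro sum.cong) (auto simp: primes_between_def)
  also have "\<dots> \<le> (\<Sum>d\<in>{u<..v}. mangoldt d / real d)"
    by (intro sum_mono2) (auto simp: primes_between_def mangoldt_nonneg)
  finally show ?thesis using mertens_sum_diff[OF assms] by simp
qed

lemma mertens_sum_diff_le_sum_ln_prime_div:
  assumes "u \<le> v"
  shows "mertens_sum v - mertens_sum u \<le> (\<Sum>p\<in>primes_between u v. ln (real p) / real p)
           + real (card (higher_prime_powers v)) * ln (real v) / (real u + 1)"
proof -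
  define P where "P = primes_between u v"
  define Q where "Q = {d\<in>{u<..v}. primepow d \<and> \<not> prime d}"
  have "P \<subseteq> {u<..v}" unfolding P_def primes_between_def by auto
  then have "mertens_sum v - mertens_sum u
      = (\<Sum>d\<in>P. mangoldt d / real d) + (\<Sum>d\<in>{u<..v} - P. mangoldt d / real d)"
    using mertens_sum_diff[OF assms] by (simp add: sum.subset_diff[of P])
  also have "(\<Sum>d\<in>P. mangoldt d / real d) = (\<Sum>p\<in>P. ln (real p) / real p)"
    unfolding P_def primes_between_def by (intro sum.cong) auto
  also have "(\<Sum>d\<in>{u<..v} - P. mangoldt d / real d) = (\<Sum>d\<in>Q. mangoldt d / real d)"
    by (intro sum.mono_neutral_right) (auto simp: Q_def P_def primes_between_def mangoldt_def)
  also have "\<dots> \<le> (\<Sum>d\<in>Q. ln (real v) / (real u + 1))"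
  proof (intro sum_mono)
    fix d assume "d \<in> Q"
    then have d: "1 \<le> d" "d \<le> v" "real u + 1 \<le> real d" unfolding Q_def by auto
    have "mangoldt d \<le> ln (real d)" using d by (intro mangoldt_le) simp
    also have "\<dots> \<le> ln (real v)" using d by simp
    finally show "mangoldt d / real d \<le> ln (real v) / (real u + 1)"
      using d mangoldt_nonneg[of d] by (intro frac_le) auto
  qed
  also have "\<dots> \<le> real (card (higher_prime_powers v)) * (ln (real v) / (real u + 1))"
  proof -
    have "Q \<subseteq> higher_prime_powers v" unfolding Q_def higher_prime_powers_def by auto
    then have "card Q \<le> card (higher_prime_powers v)"
      using finite_higher_prime_powers by (rule card_mono[rotated])
    then show ?thesis by (cases "v = 0") (auto intro!: divide_right_mono mult_right_mono)
  qed
  finally show ?thesis unfolding P_def by simp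
qed

lemma sum_ln_prime_div_approx:
  assumes "2 \<le> y" "y \<le> real N"
  shows "\<bar>(\<Sum>p\<in>primes_between y N. ln (real p) / real p) - (ln (real N) - ln y)\<bar>
           \<le> 6 + real (card (higher_prime_powers N)) * ln (real N) / y"
proof -
  define Y where "Y = nat \<lfloor>y\<rfloor>"
  have Y: "real Y \<le> y" "y < real Y + 1" using assms unfolding Y_def by (simp_all add: of_nat_nat)
  then have "1 \<le> Y" "Y \<le> N" using assms by linarith+
  have "ln (y / 2) \<le> ln (real Y)" using Y assms by (subst ln_le_cancel_iff) simp_all
  then have ln_Y: "ln y - 1 \<le> ln (real Y)" "ln (real Y) \<le> ln y"
    using Y assms ln_le_minus_one[of 2] by (simp_all add: ln_div)
  have "primes_between y N = primes_between Y N"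
    using Y unfolding primes_between_def by force
  moreover have "real (card (higher_prime_powers N)) * ln (real N) / (real Y + 1)
      \<le> real (card (higher_prime_powers N)) * ln (real N) / y"
    using Y assms by (intro divide_left_mono) simp_all
  moreover note sum_ln_prime_div_le_mertens_sum_diff[OF \<open>Y \<le> N\<close>]
    mertens_sum_diff_le_sum_ln_prime_div[OF \<open>Y \<le> N\<close>]
    mertens_sum_bounds[of N] mertens_sum_bounds[of Y]
  ultimately show ?thesis
    using ln_Y \<open>1 \<le> Y\<close> \<open>Y \<le> N\<close> ln_le_minus_one[of 2] by (simp add: abs_le_iff)
qed

lemma sum_inverse_le_sum_ln_div:
  assumes "1 < y" "\<And>p. p \<in> P \<Longrightarrow> y < real p"
  shows "(\<Sum>p\<in>P. 1 / real p) \<le> (\<Sum>p\<in>P. ln (real p) / real p) / ln y"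
  unfolding sum_divide_distrib
proof (intro sum_mono)
  fix p assume "p \<in> P"
  then have "y < real p" using assms(2) by blast
  then have "ln y < ln (real p)" "real p > 0" using assms(1) by simp_all
  then show "1 / real p \<le> ln (real p) / real p / ln y" using assms by (simp add: field_simps)
qed

lemma sum_ln_div_le_sum_inverse:
  assumes "1 < x" "\<And>p. p \<in> P \<Longrightarrow> 1 \<le> p \<and> real p \<le> x"
  shows "(\<Sum>p\<in>P. ln (real p) / real p) / ln x \<le> (\<Sum>p\<in>P. 1 / real p)"
  unfolding sum_divide_distrib
proof (intro sum_mono)
  fix p assume "p \<in> P"
  then have p: "1 \<le> real p" "real p \<le> x" using assms(2) by simp_all
  then have "ln (real p) \<le> ln x" by (subst ln_le_cancel_iff) simp_all
  then show "ln (real p) / real p / ln x \<le> 1 / real p" using assms p by (simp add: field_simps)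
qed

lemma card_primes_between_le:
  assumes "1 < y"
  shows "real (card (primes_between y N)) * ln y \<le> chebyshev_psi N"
proof -
  have "real (card (primes_between y N)) * ln y = (\<Sum>p\<in>primes_between y N. ln y)" by simp
  also have "\<dots> \<le> (\<Sum>p\<in>primes_between y N. mangoldt p)"
    using assms by (intro sum_mono) (auto simp: primes_between_def)
  also have "\<dots> \<le> chebyshev_psi N" unfolding chebyshev_psi_def
    by (intro sum_mono2) (auto simp: primes_between_def mangoldt_nonneg Suc_le_eq prime_gt_0_nat)
  finally show ?thesis .
qed

section \<open>The sum over prime pairs\<close>

definition prime_pairs :: "real \<Rightarrow> real \<Rightarrow> nat \<Rightarrow> (nat \<times> nat) set" where
  "prime_pairs c y N = {(m, p). m \<ge> 1 \<and> prime p \<and>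
     real N < real (m * p) \<and> real (m * p) \<le> c * real N \<and> real p > y}"

lemma prime_sum_conv_prime_pairs:
  "prime_sum c \<alpha> N = (\<Sum>(m, p)\<in>prime_pairs c (real N / ln (real N) powr \<alpha>) N. 1 / real (m * p))"
  unfolding prime_sum_def prime_pairs_def ..

lemma sum_prime_pairs_conv_cofactor_sum:
  assumes "c \<ge> 0"
  shows "(\<Sum>(m, p)\<in>prime_pairs c y N. 1 / real (m * p))
           = (\<Sum>p\<in>primes_between y (c * real N). cofactor_sum c N p / real p)"
proof -
  define P where "P = primes_between y (c * real N)"
  have pairs: "prime_pairs c y N = (\<lambda>(p, m). (m, p)) ` (SIGMA p:P. cofactors c N p)"
  proof (intro equalityI subsetI)
    fix x assume "x \<in> prime_pairs c y N"
    then obtain m p where x: "x = (m, p)" "m \<ge> 1" "prime p" "real N < real (m * p)"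
       "real (m * p) \<le> c * real N" "real p > y"
      unfolding prime_pairs_def by auto
    have "p \<le> m * p" using x(2) by simp
    then have "real p \<le> real (m * p)" by (simp only: of_nat_le_iff)
    then have "p \<in> P" using x unfolding P_def primes_between_def by auto
    moreover have "m \<in> cofactors c N p" using x unfolding cofactors_def by auto
    ultimately show "x \<in> (\<lambda>(p, m). (m, p)) ` (SIGMA p:P. cofactors c N p)" using x by force
  next
    fix x assume "x \<in> (\<lambda>(p, m). (m, p)) ` (SIGMA p:P. cofactors c N p)"
    then obtain m p where x: "x = (m, p)" "p \<in> P" "m \<in> cofactors c N p" by auto
    then have "m \<noteq> 0" unfolding cofactors_def by (cases m) auto
    then show "x \<in> prime_pairs c y N"
      using x unfolding prime_pairs_def P_def primes_between_def cofactors_def by auto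
  qed
  have "(\<Sum>(m, p)\<in>prime_pairs c y N. 1 / real (m * p))
      = (\<Sum>(p, m)\<in>(SIGMA p:P. cofactors c N p). 1 / real m / real p)"
    unfolding pairs by (subst sum.reindex) (auto simp: inj_on_def intro!: sum.cong)
  also have "\<dots> = (\<Sum>p\<in>P. cofactor_sum c N p / real p)"
  proof -
    have "finite P" unfolding P_def by (rule finite_primes_between)
    moreover have "finite (cofactors c N p)" if "p \<in> P" for p
      using that assms by (intro finite_cofactors) (simp_all add: P_def primes_between_def prime_gt_0_nat)
    ultimately show ?thesis
      unfolding cofactor_sum_def sum_divide_distrib by (subst sum.Sigma) auto
  qed
  finally show ?thesis unfolding P_def .
qed

lemma sum_prime_pairs_split:
  assumes "1 \<le> c" "y \<le> real N"
  shows "(\<Sum>(m, p)\<in>prime_pairs c y N. 1 / real (m * p))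
           = (\<Sum>p\<in>primes_between y N. cofactor_sum c N p / real p)
             + (\<Sum>p\<in>primes_between N (c * real N). cofactor_sum c N p / real p)"
proof -
  have "real N \<le> c * real N" using assms(1) mult_right_mono[of 1 c "real N"] by simp
  then have "real p \<le> c * real N" if "p \<le> N" for p
    using that by (meson of_nat_le_iff order_trans)
  then have "primes_between y (c * real N) = primes_between y N \<union> primes_between N (c * real N)"
    using assms(2) unfolding primes_between_def by auto
  moreover have "primes_between y N \<inter> primes_between N (c * real N) = {}"
    unfolding primes_between_def by auto
  moreover have "0 \<le> c" using assms(1) by simp
  ultimately show ?thesis
    unfolding sum_prime_pairs_conv_cofactor_sum[OF \<open>0 \<le> c\<close>]
    by (simp add: sum.union_disjoint finite_primes_between)
qed

lemma sum_cofactor_sum_small_primes: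
  assumes "c > 1" "1 < y"
  shows "\<bar>(\<Sum>p\<in>primes_between y N. cofactor_sum c N p / real p)
            - ln c * (\<Sum>p\<in>primes_between y N. 1 / real p)\<bar> \<le> 8 * ln 2 / ln y"
proof (cases "N = 0")
  case True
  then have "primes_between y N = {}" using assms by (auto simp: primes_between_def)
  then show ?thesis using assms by simp
next
  case False
  define P where "P = primes_between y N"
  have "\<bar>(\<Sum>p\<in>P. cofactor_sum c N p / real p) - ln c * (\<Sum>p\<in>P. 1 / real p)\<bar>
      = \<bar>\<Sum>p\<in>P. (cofactor_sum c N p - ln c) / real p\<bar>"
    by (simp add: sum_distrib_left sum_subtractf diff_divide_distrib)
  also have "\<dots> \<le> (\<Sum>p\<in>P. 2 / real N)"
  proof (rule order_trans[OF sum_abs sum_mono])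
    fix p assume "p \<in> P"
    then have p: "1 \<le> p" "p \<le> N" unfolding P_def primes_between_def by (auto simp: Suc_le_eq prime_gt_0_nat)
    then have "\<bar>cofactor_sum c N p - ln c\<bar> / real p \<le> 2 * real p / real N / real p"
      using cofactor_sum_approx_ln[OF assms(1) p] by (intro divide_right_mono) simp_all
    then show "\<bar>(cofactor_sum c N p - ln c) / real p\<bar> \<le> 2 / real N"
      using p by (simp add: abs_divide)
  qed
  also have "\<dots> = 2 * (real (card P) * ln y) / real N / ln y" using assms by simp
  also have "\<dots> \<le> 2 * (4 * ln 2 * real N) / real N / ln y"
    using card_primes_between_le[OF assms(2), of N] chebyshev_psi_le[of N] assms
    unfolding P_def by (intro divide_right_mono mult_left_mono) simp_all
  also have "\<dots> = 8 * ln 2 / ln y" using False by simp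
  finally show ?thesis unfolding P_def .
qed

lemma sum_cofactor_sum_large_primes:
  assumes "c > 1" "2 \<le> N"
  shows "(\<Sum>p\<in>primes_between N (c * real N). cofactor_sum c N p / real p) \<le> c * (ln c + 5) / ln (real N)"
proof -
  define L where "L = ln (real N)"
  define B where "B = nat \<lfloor>c * real N\<rfloor>"
  have L: "L > 0" using assms unfolding L_def by simp
  have le_B: "p \<le> B \<longleftrightarrow> real p \<le> c * real N" for p
    unfolding B_def using assms by (simp add: le_nat_iff le_floor_iff)
  have "N \<le> B" using le_B[of N] assms by simp
  have "real B \<le> c * real N" using le_B[of B] by simp
  have primes: "primes_between N (c * real N) = primes_between N B"
    unfolding primes_between_def using le_B by auto
  have "(\<Sum>p\<in>primes_between N B. cofactor_sum c N p / real p)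
      \<le> (\<Sum>p\<in>primes_between N B. c * (ln (real p) / real p) / L)"
  proof (intro sum_mono)
    fix p assume "p \<in> primes_between N B"
    then have "N < p" by (simp add: primes_between_def)
    then have "L \<le> ln (real p)" "real p > 0" using assms unfolding L_def by simp_all
    have "cofactor_sum c N p / real p \<le> c / real p"
      using cofactor_sum_le[OF assms(1) \<open>N < p\<close>] \<open>real p > 0\<close> by (intro divide_right_mono) simp_all
    also have "\<dots> = c * (L / real p) / L" using L by simp
    also have "\<dots> \<le> c * (ln (real p) / real p) / L"
      using L assms \<open>L \<le> ln (real p)\<close> \<open>real p > 0\<close>
      by (intro divide_right_mono mult_left_mono) simp_all
    finally show "cofactor_sum c N p / real p \<le> c * (ln (real p) / real p) / L" .
  qed
  also have "\<dots> = c * (\<Sum>p\<in>primes_between N B. ln (real p) / real p) / L"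
    by (simp add: sum_distrib_left sum_divide_distrib)
  also have "\<dots> \<le> c * (mertens_sum B - mertens_sum N) / L"
    using sum_ln_prime_div_le_mertens_sum_diff[OF \<open>N \<le> B\<close>] assms L
    by (intro divide_right_mono mult_left_mono) simp_all
  also have "\<dots> \<le> c * (ln c + 5) / L"
  proof -
    have "ln (real B) \<le> ln (c * real N)" using \<open>real B \<le> c * real N\<close> \<open>N \<le> B\<close> assms by simp
    also have "\<dots> = ln c + L" unfolding L_def using assms by (simp add: ln_mult)
    finally have "mertens_sum B - mertens_sum N \<le> ln c + 5"
      using mertens_sum_bounds[of B] mertens_sum_bounds[of N] \<open>N \<le> B\<close> assms ln_le_minus_one[of 2]
      unfolding L_def by simp
    then show ?thesis using assms L by (intro divide_right_mono mult_left_mono) simp_all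
  qed
  finally show ?thesis unfolding primes L_def .
qed

lemma sum_inverse_primes_approx:
  fixes y :: real and N :: nat
  defines "L \<equiv> ln (real N)" and "u \<equiv> ln (real N) - ln y"
  assumes "2 \<le> y" "y \<le> real N" "u \<le> L / 2" "u\<^sup>2 \<le> L"
    and "L * (sqrt (real N) + 1) * (log 2 (real N) + 1) \<le> y"
  shows "\<bar>(\<Sum>p\<in>primes_between y N. 1 / real p) - u / L\<bar> \<le> 16 / L"
proof -
  define T where "T = (\<Sum>p\<in>primes_between y N. ln (real p) / real p)"
  define R where "R = (\<Sum>p\<in>primes_between y N. 1 / real p)"
  have "0 < ln y" "ln y \<le> ln (real N)" using assms(3,4) by simp_all
  then have L: "0 < L - u" "L - u = ln y" "0 < L" "0 \<le> u" unfolding L_def u_def by simp_all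
  have "real (card (higher_prime_powers N)) * L \<le> (sqrt (real N) + 1) * (log 2 (real N) + 1) * L"
    using card_higher_prime_powers_le[of N] assms(3,4) L(3) by (intro mult_right_mono) simp_all
  also have "\<dots> \<le> y" using assms(7) by (simp add: ac_simps)
  finally have "real (card (higher_prime_powers N)) * L / y \<le> 1" using assms(3) by simp
  then have "\<bar>T - u\<bar> \<le> 7"
    using sum_ln_prime_div_approx[OF assms(3,4)] unfolding T_def u_def L_def by linarith
  then have "(u - 7) / L \<le> T / L" using L(3) by (intro divide_right_mono) (simp_all add: abs_le_iff)
  also have "T / L \<le> R"
    unfolding T_def R_def L_def using assms(3,4)
    by (intro sum_ln_div_le_sum_inverse) (auto simp: primes_between_def Suc_le_eq prime_gt_0_nat)
  finally have "(u - 7) / L \<le> R" .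
  moreover have "7 / L \<le> 16 / L" using L by (simp add: divide_right_mono)
  ultimately have lower: "- 16 / L \<le> R - u / L" by (simp add: diff_divide_distrib)
  have "R \<le> T / ln y"
    unfolding T_def R_def using assms(3)
    by (intro sum_inverse_le_sum_ln_div) (auto simp: primes_between_def)
  also have "\<dots> = T / (L - u)" using L(2) by simp
  also have "\<dots> \<le> (u + 7) / (L - u)"
    using \<open>\<bar>T - u\<bar> \<le> 7\<close> L(1) by (intro divide_right_mono) (simp_all add: abs_le_iff)
  also have "\<dots> \<le> (u + 16) / L"
  proof -
    have "(u + 7) * L \<le> (u + 16) * (L - u)"
      using assms(5,6) by (simp add: power2_eq_square algebra_simps)
    then show ?thesis using L by (simp add: divide_simps)
  qed
  finally have upper: "R - u / L \<le> 16 / L" by (simp add: add_divide_distrib)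
  show ?thesis using lower upper unfolding R_def by (simp add: abs_le_iff)
qed

lemma prime_sum_approx:
  fixes c \<alpha> :: real and N :: nat
  defines "L \<equiv> ln (real N)"
  assumes "c > 1" "\<alpha> > 0" "1 \<le> L" "2 \<le> real N / L powr \<alpha>"
    and "\<alpha> * ln L \<le> L / 2" "(\<alpha> * ln L)\<^sup>2 \<le> L"
    and "L * (sqrt (real N) + 1) * (log 2 (real N) + 1) \<le> real N / L powr \<alpha>"
  shows "\<bar>prime_sum c \<alpha> N - \<alpha> * ln c * ln L / L\<bar> \<le> (16 * ln c + 16 + c * (ln c + 5)) / L"
proof -
  define y where "y = real N / L powr \<alpha>"
  define u where "u = \<alpha> * ln L"
  have "N > 0" using assms(4) unfolding L_def by (cases N) simp_all
  have "1 \<le> L powr \<alpha>" using assms(3,4) by (intro ge_one_powr_ge_zero) simp_all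
  then have y: "2 \<le> y" "y \<le> real N" "ln (real N) - ln y = u"
    using assms(5) \<open>N > 0\<close> unfolding y_def u_def L_def by (simp_all add: divide_le_eq ln_div ln_powr)
  then have "2 \<le> N" by linarith
  define S1 where "S1 = (\<Sum>p\<in>primes_between y N. cofactor_sum c N p / real p)"
  define S2 where "S2 = (\<Sum>p\<in>primes_between N (c * real N). cofactor_sum c N p / real p)"
  define R where "R = (\<Sum>p\<in>primes_between y N. 1 / real p)"
  have "prime_sum c \<alpha> N = S1 + S2"
    unfolding prime_sum_conv_prime_pairs S1_def S2_def L_def[symmetric] y_def[symmetric]
    by (rule sum_prime_pairs_split) (use assms(2) y(2) in simp_all)
  then have "prime_sum c \<alpha> N - \<alpha> * ln c * ln L / L = (S1 - ln c * R) + ln c * (R - u / L) + S2"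
    unfolding u_def by (simp add: algebra_simps)
  also have "\<bar>\<dots>\<bar> \<le> \<bar>S1 - ln c * R\<bar> + \<bar>ln c * (R - u / L)\<bar> + \<bar>S2\<bar>"
    by (rule order_trans[OF abs_triangle_ineq add_mono[OF abs_triangle_ineq order_refl]])
  also have "\<dots> \<le> 16 / L + ln c * (16 / L) + c * (ln c + 5) / L"
  proof (intro add_mono)
    have "L / 2 \<le> ln y" using y assms(6) unfolding u_def L_def by linarith
    then have "8 * ln 2 / ln y \<le> 8 * 1 / (L / 2)"
      using assms(4) ln_le_minus_one[of 2] by (intro frac_le) simp_all
    then show "\<bar>S1 - ln c * R\<bar> \<le> 16 / L"
      using sum_cofactor_sum_small_primes[OF assms(2), of y N] y unfolding S1_def R_def by simp
    have "\<bar>R - u / L\<bar> \<le> 16 / L"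
      using sum_inverse_primes_approx[of y N] y assms(6,7,8)
      unfolding R_def u_def L_def y_def by (simp add: power2_eq_square)
    then have "ln c * \<bar>R - u / L\<bar> \<le> ln c * (16 / L)"
      by (rule mult_left_mono) (use assms(2) in simp)
    then show "\<bar>ln c * (R - u / L)\<bar> \<le> ln c * (16 / L)"
      using assms(2) by (simp add: abs_mult)
    show "\<bar>S2\<bar> \<le> c * (ln c + 5) / L"
      using sum_cofactor_sum_large_primes[OF assms(2) \<open>2 \<le> N\<close>]
      unfolding S2_def L_def by (simp add: sum_nonneg cofactor_sum_nonneg)
  qed
  also have "\<dots> = (16 * ln c + 16 + c * (ln c + 5)) / L" by (simp add: add_divide_distrib)
  finally show ?thesis .
qed

section \<open>Higher prime powers\<close>

definition prime_power_triples :: "real \<Rightarrow> real \<Rightarrow> nat \<Rightarrow> (nat \<times> nat \<times> nat) set" where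
  "prime_power_triples c y N = {(m, p, a). m \<ge> 1 \<and> prime p \<and> a \<ge> 1 \<and>
     real N < real (m * p ^ a) \<and> real (m * p ^ a) \<le> c * real N \<and> real (p ^ a) > y}"

lemma prime_power_sum_conv_prime_power_triples:
  "prime_power_sum c \<alpha> N
     = (\<Sum>(m, p, a)\<in>prime_power_triples c (real N / ln (real N) powr \<alpha>) N. 1 / real (m * p ^ a))"
  unfolding prime_power_sum_def prime_power_triples_def ..

lemma finite_prime_power_triples: "finite (prime_power_triples c y N)"
proof -
  define B where "B = nat \<lfloor>c * real N\<rfloor>"
  have "prime_power_triples c y N \<subseteq> {..B} \<times> {..B} \<times> {..B}"
  proof safe
    fix m p a assume "(m, p, a) \<in> prime_power_triples c y N"
    then have t: "m \<ge> 1" "prime p" "a \<ge> 1" "real (m * p ^ a) \<le> c * real N"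
      unfolding prime_power_triples_def by auto
    then have "m * p ^ a \<le> B" unfolding B_def by (intro le_nat_floor)
    have "p \<ge> 2" using t prime_ge_2_nat by blast
    then have "a < p ^ a" using less_exp[of a] power_mono[of 2 p a] by linarith
    moreover have "p \<le> p ^ a" using t \<open>p \<ge> 2\<close> by (intro self_le_power) simp_all
    moreover have "p ^ a \<le> m * p ^ a" "m \<le> m * p ^ a" using t \<open>p \<ge> 2\<close> by simp_all
    ultimately show "m \<le> B" "p \<le> B" "a \<le> B" using \<open>m * p ^ a \<le> B\<close> by linarith+
  qed
  then show ?thesis by (rule finite_subset) simp
qed

lemma prime_power_triples_eq:
  "prime_power_triples c y N
     = (\<lambda>(m, p). (m, p, 1)) ` prime_pairs c y N \<union> {(m, p, a) \<in> prime_power_triples c y N. 2 \<le> a}"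
proof (intro equalityI subsetI)
  fix t assume t: "t \<in> prime_power_triples c y N"
  then obtain m p a where mpa: "t = (m, p, a)" "a \<ge> 1" by (auto simp: prime_power_triples_def)
  show "t \<in> (\<lambda>(m, p). (m, p, 1)) ` prime_pairs c y N \<union> {(m, p, a) \<in> prime_power_triples c y N. 2 \<le> a}"
  proof (cases "a = 1")
    case True
    then have "(m, p) \<in> prime_pairs c y N"
      using t mpa by (simp add: prime_power_triples_def prime_pairs_def)
    then show ?thesis using True mpa by force
  next
    case False
    then show ?thesis using t mpa by simp
  qed
next
  fix t assume "t \<in> (\<lambda>(m, p). (m, p, 1)) ` prime_pairs c y N \<union> {(m, p, a) \<in> prime_power_triples c y N. 2 \<le> a}"
  then show "t \<in> prime_power_triples c y N" by (auto simp: prime_power_triples_def prime_pairs_def)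
qed

lemma card_higher_prime_power_triples_le:
  assumes "y > 0" "1 \<le> c * real N"
  shows "real (card {(m, p, a) \<in> prime_power_triples c y N. 2 \<le> a})
           \<le> (c * real N / y + 1) * (sqrt (c * real N) + 1) * (log 2 (c * real N) + 1)"
proof -
  define X where "X = c * real N"
  define B where "B = {..nat \<lfloor>X / y\<rfloor>} \<times> {..nat \<lfloor>sqrt X\<rfloor>} \<times> {..nat \<lfloor>log 2 X\<rfloor>}"
  have "{(m, p, a) \<in> prime_power_triples c y N. 2 \<le> a} \<subseteq> B"
  proof safe
    fix m p a assume "(m, p, a) \<in> prime_power_triples c y N" "2 \<le> a"
    then have t: "m \<ge> 1" "prime p" "real (m * p ^ a) \<le> X" "y < real (p ^ a)"
      unfolding prime_power_triples_def X_def by auto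
    have "real m * y \<le> real m * real (p ^ a)" using t by (intro mult_left_mono) simp_all
    also have "\<dots> \<le> X" using t by simp
    finally have "m \<le> nat \<lfloor>X / y\<rfloor>" using assms by (intro le_nat_floor) (simp add: field_simps)
    moreover have "p ^ a \<le> m * p ^ a" using t by simp
    then have "real (p ^ a) \<le> X" using t(3) by (simp only: of_nat_le_iff flip: of_nat_mult)
    then have "p \<le> nat \<lfloor>sqrt X\<rfloor>" "a \<le> nat \<lfloor>log 2 X\<rfloor>"
      using prime_power_base_exponent_bounds[OF t(2) \<open>2 \<le> a\<close>] by (simp_all add: le_nat_floor)
    ultimately show "(m, p, a) \<in> B" unfolding B_def by simp
  qed
  then have "card {(m, p, a) \<in> prime_power_triples c y N. 2 \<le> a} \<le> card B"
    by (rule card_mono[rotated]) (simp add: B_def)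
  then have "real (card {(m, p, a) \<in> prime_power_triples c y N. 2 \<le> a})
      \<le> real (card {..nat \<lfloor>X / y\<rfloor>}) * (real (card {..nat \<lfloor>sqrt X\<rfloor>}) * real (card {..nat \<lfloor>log 2 X\<rfloor>}))"
    unfolding B_def card_cartesian_product by (simp only: of_nat_le_iff flip: of_nat_mult)
  also have "\<dots> \<le> (X / y + 1) * ((sqrt X + 1) * (log 2 X + 1))"
    using assms unfolding X_def by (intro mult_mono real_card_atMost_nat_floor) simp_all
  finally show ?thesis unfolding X_def by (simp add: mult.assoc)
qed

lemma sum_prime_power_triples_minus_sum_prime_pairs:
  assumes "y > 0" "1 \<le> c * real N"
  defines "D \<equiv> (\<Sum>(m, p, a)\<in>prime_power_triples c y N. 1 / real (m * p ^ a))
                - (\<Sum>(m, p)\<in>prime_pairs c y N. 1 / real (m * p))"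
  shows "0 \<le> D"
    and "D \<le> (c * real N / y + 1) * (sqrt (c * real N) + 1) * (log 2 (c * real N) + 1) / real N"
proof -
  define H where "H = {(m, p, a) \<in> prime_power_triples c y N. 2 \<le> a}"
  define P where "P = (\<lambda>(m, p). (m, p, 1::nat)) ` prime_pairs c y N"
  have triples: "prime_power_triples c y N = P \<union> H"
    unfolding P_def H_def by (rule prime_power_triples_eq)
  then have "finite P" "finite H" using finite_prime_power_triples[of c y N] by simp_all
  moreover have "P \<inter> H = {}" unfolding P_def H_def by auto
  moreover have "inj_on (\<lambda>(m, p). (m, p, 1::nat)) (prime_pairs c y N)" by (auto simp: inj_on_def)
  ultimately have D: "D = (\<Sum>(m, p, a)\<in>H. 1 / real (m * p ^ a))"
    unfolding D_def triples by (simp add: sum.union_disjoint P_def sum.reindex case_prod_unfold)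
  then show "0 \<le> D" by (simp add: sum_nonneg split_beta)
  have "0 < real N" using assms(2) by (cases "N = 0") simp_all
  have "1 / real (m * p ^ a) \<le> 1 / real N" if "(m, p, a) \<in> H" for m p a
  proof -
    have "real N < real (m * p ^ a)" using that unfolding H_def prime_power_triples_def by auto
    then show ?thesis using \<open>0 < real N\<close> by (intro frac_le) simp_all
  qed
  then have "D \<le> real (card H) * (1 / real N)"
    unfolding D by (intro sum_bounded_above) auto
  also have "\<dots> \<le> (c * real N / y + 1) * (sqrt (c * real N) + 1) * (log 2 (c * real N) + 1) / real N"
    using card_higher_prime_power_triples_le[OF assms(1,2)] unfolding H_def by (simp add: divide_right_mono)
  finally show "D \<le> (c * real N / y + 1) * (sqrt (c * real N) + 1) * (log 2 (c * real N) + 1) / real N" .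
qed

lemma bigo_inverse_ln_of_eventually_le:
  fixes f :: "nat \<Rightarrow> real"
  assumes "eventually (\<lambda>N. \<bar>f N\<bar> \<le> K / ln (real N)) at_top"
  shows "f \<in> O(\<lambda>N. 1 / ln (real N))"
proof (rule bigoI)
  have "eventually (\<lambda>N::nat. 0 < ln (real N)) at_top" by real_asymp
  with assms show "eventually (\<lambda>N. norm (f N) \<le> K * norm (1 / ln (real N))) at_top"
    by eventually_elim simp
qed

lemma prime_sum_approx_eventually:
  assumes "c > 1" "\<alpha> > 0"
  shows "eventually (\<lambda>N::nat. \<bar>prime_sum c \<alpha> N - \<alpha> * ln c * ln (ln (real N)) / ln (real N)\<bar>
           \<le> (16 * ln c + 16 + c * (ln c + 5)) / ln (real N)) at_top"
proof -
  have "eventually (\<lambda>N::nat. 1 \<le> ln (real N)) at_top" by real_asymp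
  moreover have "eventually (\<lambda>N::nat. 2 \<le> real N / ln (real N) powr \<alpha>) at_top"
    using assms by real_asymp
  moreover have "eventually (\<lambda>N::nat. \<alpha> * ln (ln (real N)) \<le> ln (real N) / 2) at_top"
    using assms by real_asymp
  moreover have "eventually (\<lambda>N::nat. (\<alpha> * ln (ln (real N)))\<^sup>2 \<le> ln (real N)) at_top"
    using assms by real_asymp
  moreover have "eventually (\<lambda>N::nat. ln (real N) * (sqrt (real N) + 1) * (log 2 (real N) + 1)
      \<le> real N / ln (real N) powr \<alpha>) at_top"
    using assms by real_asymp
  ultimately show ?thesis by eventually_elim (rule prime_sum_approx[OF assms])
qed

lemma prime_power_sum_minus_prime_sum_eventually:
  assumes "c > 1" "\<alpha> > 0"
  shows "eventually (\<lambda>N::nat. \<bar>prime_power_sum c \<alpha> N - prime_sum c \<alpha> N\<bar> \<le> 1 / ln (real N)) at_top"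
proof -
  have "eventually (\<lambda>N::nat. 2 \<le> N) at_top" by (rule eventually_ge_at_top)
  moreover have "eventually (\<lambda>N::nat. (c * ln (real N) powr \<alpha> + 1) * (sqrt (c * real N) + 1)
      * (log 2 (c * real N) + 1) / real N \<le> 1 / ln (real N)) at_top"
    using assms by real_asymp
  ultimately show ?thesis
  proof eventually_elim
    case (elim N)
    define y where "y = real N / ln (real N) powr \<alpha>"
    have "0 < ln (real N)" using elim by simp
    then have "y > 0" "c * real N / y = c * ln (real N) powr \<alpha>" using elim unfolding y_def by simp_all
    moreover have "1 \<le> c * real N" using elim assms mult_mono[of 1 c 1 "real N"] by simp
    ultimately show ?case
      using sum_prime_power_triples_minus_sum_prime_pairs[of y c N] elim
      unfolding prime_power_sum_conv_prime_power_triples prime_sum_conv_prime_pairs y_def[symmetric]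
      by simp
  qed
qed

theorem lemma2:
  fixes c \<alpha> :: real
  assumes "c > 1" and "\<alpha> > 0"
  shows "(\<lambda>N::nat. prime_power_sum c \<alpha> N - \<alpha> * ln c * ln (ln (real N)) / ln (real N))
           \<in> O(\<lambda>N. 1 / ln (real N)) \<and>
         (\<lambda>N::nat. prime_sum c \<alpha> N - \<alpha> * ln c * ln (ln (real N)) / ln (real N))
           \<in> O(\<lambda>N. 1 / ln (real N))"
proof -
  have prime_sum: "(\<lambda>N::nat. prime_sum c \<alpha> N - \<alpha> * ln c * ln (ln (real N)) / ln (real N))
      \<in> O(\<lambda>N. 1 / ln (real N))"
    using prime_sum_approx_eventually[OF assms] by (rule bigo_inverse_ln_of_eventually_le)
  have "(\<lambda>N::nat. prime_power_sum c \<alpha> N - prime_sum c \<alpha> N) \<in> O(\<lambda>N. 1 / ln (real N))"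
    using prime_power_sum_minus_prime_sum_eventually[OF assms] by (rule bigo_inverse_ln_of_eventually_le)
  from sum_in_bigo(1)[OF this prime_sum] prime_sum show ?thesis by simp
qed

end
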